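(* Let $m\ge3$ and let $G$ be an $m$-uniform hypergraph on vertex set $[n]$ with at least one edge. Then the signless Laplacian tensor of $G$ is not completely positive.
   Context: An $m$-uniform hypergraph $G=(V,E)$ with $V=[n]$ has edges that are sets of exactly $m$ distinct vertices. Its adjacency tensor $\mathcal{A}\in\mathbb{S}_{m,n}$ has entries $a_{i_1\ldots i_m}=1/(m-1)!$ if $\{i_1,\dots,i_m\}\in E$ and $0$ otherwise; $\mathcal{D}$ is the diagonal tensor with $d_{i\ldots i}$ equal to the degree of vertex $i$; the signless Laplacian tensor is $\mathcal{Q}=\mathcal{D}+\mathcal{A}$. A tensor $\mathcal{A}\in\mathbb{S}_{m,n}$ (symmetric real $m$th order $n$-dimensional) is completely positive if $\mathcal{A}=\sum_{k=1}^r(u^{(k)})^m$ for some $r\ge1$ and $u^{(k)}\in\mathbb{R}^n_+$, where $(u^m)_{i_1\ldots i_m}=u_{i_1}\cdots u_{i_m}$. *)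

theory Defs
  imports Complex_Main "HOL-Library.Multiset"
begin

text \<open>Tensors of order m and dimension n are functions on index lists; only lists of
length m with entries in {1..n} are meaningful.\<close>

definition tensor_index :: "nat \<Rightarrow> nat \<Rightarrow> nat list \<Rightarrow> bool" where
  "tensor_index m n is \<longleftrightarrow> length is = m \<and> set is \<subseteq> {1..n}"

definition uniform_hypergraph :: "nat \<Rightarrow> nat \<Rightarrow> nat set set \<Rightarrow> bool" where
  "uniform_hypergraph m n E \<longleftrightarrow> (\<forall>e\<in>E. e \<subseteq> {1..n} \<and> card e = m)"

definition hdegree :: "nat set set \<Rightarrow> nat \<Rightarrow> nat" where
  "hdegree E i = card {e\<in>E. i \<in> e}"

definition adjacency_tensor :: "nat \<Rightarrow> nat set set \<Rightarrow> nat list \<Rightarrow> real" where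
  "adjacency_tensor m E is =
     (if distinct is \<and> set is \<in> E then 1 / real (fact (m - 1)) else 0)"

definition degree_tensor :: "nat \<Rightarrow> nat set set \<Rightarrow> nat list \<Rightarrow> real" where
  "degree_tensor m E is =
     (if \<exists>i. is = replicate m i then real (hdegree E (hd is)) else 0)"

definition signless_laplacian :: "nat \<Rightarrow> nat set set \<Rightarrow> nat list \<Rightarrow> real" where
  "signless_laplacian m E is = degree_tensor m E is + adjacency_tensor m E is"

definition symmetric_tensor :: "nat \<Rightarrow> nat \<Rightarrow> (nat list \<Rightarrow> real) \<Rightarrow> bool" where
  "symmetric_tensor m n T \<longleftrightarrow>
     (\<forall>is js. tensor_index m n is \<and> mset js = mset is \<longrightarrow> T js = T is)"

definition completely_positive :: "nat \<Rightarrow> nat \<Rightarrow> (nat list \<Rightarrow> real) \<Rightarrow> bool" where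
  "completely_positive m n T \<longleftrightarrow> symmetric_tensor m n T \<and>
     (\<exists>r::nat. r \<ge> 1 \<and> (\<exists>u :: nat \<Rightarrow> nat \<Rightarrow> real.
        (\<forall>k<r. \<forall>i\<in>{1..n}. u k i \<ge> 0) \<and>
        (\<forall>is. tensor_index m n is \<longrightarrow> T is = (\<Sum>k<r. prod_list (map (u k) is)))))"

end

theory Submission
  imports Defs
begin

text \<open>If \<open>T = \<Sum>k. (u k)^m\<close> with nonnegative vectors \<open>u k\<close>, then the entry of \<open>T\<close> at an
  index list vanishes iff every \<open>u k\<close> vanishes somewhere on the support of that list, so zero
  entries propagate to index lists with larger support. For an edge \<open>e\<close> and distinct
  \<open>a, b \<in> e\<close>, the signless Laplacian vanishes at \<open>(a, \<dots>, a, b)\<close>: this list is not constant,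
  and since \<open>m \<ge> 3\<close> the vertex \<open>a\<close> repeats, so it is not an edge either. But its support lies
  in \<open>e\<close>, where the signless Laplacian is positive.\<close>

lemma completely_positive_zero_entry_mono:
  assumes "completely_positive m n T"
    and "tensor_index m n is" and "tensor_index m n js"
    and "set js \<subseteq> set is" and "T js = 0"
  shows "T is = 0"
proof -
  obtain r :: nat and u :: "nat \<Rightarrow> nat \<Rightarrow> real" where nonneg: "\<forall>k<r. \<forall>i\<in>{1..n}. u k i \<ge> 0"
    and decomp: "\<forall>is. tensor_index m n is \<longrightarrow> T is = (\<Sum>k<r. prod_list (map (u k) is))"
    using assms(1) unfolding completely_positive_def by blast
  have prod_nonneg: "prod_list (map (u k) js) \<ge> 0" if "k < r" for k
    using assms(3) nonneg that unfolding tensor_index_def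
    by (intro prod_list_nonneg) auto
  have sum_js: "(\<Sum>k<r. prod_list (map (u k) js)) = 0"
    using decomp assms(3,5) by simp
  have "prod_list (map (u k) is) = 0" if "k < r" for k
  proof -
    have "prod_list (map (u k) js) = 0"
      using sum_nonneg_eq_0_iff[of "{..<r}" "\<lambda>k. prod_list (map (u k) js)"] sum_js prod_nonneg that
      by simp
    then obtain i where "i \<in> set js" "u k i = 0"
      by (auto simp: prod_list_zero_iff)
    with assms(4) show ?thesis
      by (auto simp: prod_list_zero_iff)
  qed
  then show ?thesis
    using decomp assms(2) by simp
qed

lemma signless_laplacian_edge_pos:
  assumes "distinct is" and "set is \<in> E"
  shows "signless_laplacian m E is > 0"
  using assms
  by (simp add: signless_laplacian_def adjacency_tensor_def degree_tensor_def add_nonneg_pos)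

lemma signless_laplacian_replicate_snoc:
  assumes "m \<ge> 3" and "a \<noteq> b"
  shows "signless_laplacian m E (replicate (m - 1) a @ [b]) = 0"
proof -
  have m: "m - 1 = Suc (Suc (m - 3))"
    using assms(1) by simp
  then have "\<not> distinct (replicate (m - 1) a @ [b])"
    by simp
  moreover have "replicate (m - 1) a @ [b] \<noteq> replicate m i" for i
  proof
    assume "replicate (m - 1) a @ [b] = replicate m i"
    then have "a \<in> set (replicate m i)" "b \<in> set (replicate m i)"
      using m by (metis Un_iff in_set_replicate list.set_intros(1) set_append nat.distinct(1))+
    with assms(2) show False
      by simp
  qed
  ultimately show ?thesis
    unfolding signless_laplacian_def adjacency_tensor_def degree_tensor_def by auto
qed

theorem mainTheorem5:
  fixes m n :: nat and E :: "nat set set"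
  assumes "m \<ge> 3"
    and "uniform_hypergraph m n E"
    and "E \<noteq> {}"
  shows "\<not> completely_positive m n (signless_laplacian m E)"
proof
  assume cp: "completely_positive m n (signless_laplacian m E)"
  obtain e where "e \<in> E" and e_sub: "e \<subseteq> {1..n}" and e_card: "card e = m"
    using assms(2,3) unfolding uniform_hypergraph_def by blast
  then have "finite e"
    using assms(1) card.infinite by fastforce
  define xs where "xs = sorted_list_of_set e"
  have xs: "distinct xs" "set xs = e" "length xs = m"
    using \<open>finite e\<close> e_card by (simp_all add: xs_def)
  obtain a b where "a \<in> e" "b \<in> e" "a \<noteq> b"
    using e_card assms(1) card_le_Suc_iff[of 1 e] by (auto simp: Suc_le_eq card_gt_0_iff)
  define js where "js = replicate (m - 1) a @ [b]"
  have "tensor_index m n xs" "tensor_index m n js"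
    using xs e_sub \<open>a \<in> e\<close> \<open>b \<in> e\<close> assms(1) by (auto simp: tensor_index_def js_def)
  moreover have "set js \<subseteq> set xs"
    using xs \<open>a \<in> e\<close> \<open>b \<in> e\<close> by (auto simp: js_def)
  moreover have "signless_laplacian m E js = 0"
    unfolding js_def using assms(1) \<open>a \<noteq> b\<close> by (rule signless_laplacian_replicate_snoc)
  ultimately have "signless_laplacian m E xs = 0"
    using completely_positive_zero_entry_mono[OF cp] by blast
  moreover have "signless_laplacian m E xs > 0"
    using xs \<open>e \<in> E\<close> by (intro signless_laplacian_edge_pos) simp_all
  ultimately show False
    by simp
qed

end
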